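(* Let $\mathscr{H}^a,\mathscr{H}^b,\mathscr{H}^c$ be nonzero finite-dimensional Hilbert spaces, with identity operators $\hat I^a,\hat I^b,\hat I^c$. Let $\hat Q^a$ be an operator on $\mathscr{H}^a$, $\hat Q^c$ an operator on $\mathscr{H}^c$, $\hat Q^{ab}$ an operator on $\mathscr{H}^a\otimes\mathscr{H}^b$, and $\hat Q^{bc}$ an operator on $\mathscr{H}^b\otimes\mathscr{H}^c$. Suppose that, as operators on $\mathscr{H}^a\otimes\mathscr{H}^b\otimes\mathscr{H}^c$, $$\hat Q^a\otimes\hat I^b\otimes\hat I^c+\hat I^a\otimes\hat Q^{bc}=\hat Q^{ab}\otimes\hat I^c+\hat I^a\otimes\hat I^b\otimes\hat Q^c .$$ Then there exists a unique operator $\hat Q^b$ on $\mathscr{H}^b$ such that simultaneously $$\hat Q^{bc}=\hat Q^b\otimes\hat I^c+\hat I^b\otimes\hat Q^c\qquad\text{and}\qquad \hat Q^{ab}=\hat Q^a\otimes\hat I^b+\hat I^a\otimes\hat Q^b .$$ *)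

theory Defs
  imports "HOL-Analysis.Analysis"
begin

text \<open>A finite-dimensional Hilbert space of dimension n is modelled by a fixed
orthonormal basis indexed by a finite type; operators are square matrices over
that type.  The tensor product of spaces has basis indexed by the product type,
and the tensor product of operators is the Kronecker product.\<close>

definition kron :: "'k::times ^'a::finite^'a \<Rightarrow> 'k^'b::finite^'b \<Rightarrow> 'k^('a \<times> 'b)^('a \<times> 'b)" where
  "kron A B = (\<chi> p. \<chi> q. (A $ fst p $ fst q) * (B $ snd p $ snd q))"

text \<open>Canonical identification of (Ha (x) Hb) (x) Hc with Ha (x) (Hb (x) Hc).\<close>

definition reassoc :: "'k^(('a::finite \<times> 'b::finite) \<times> 'c::finite)^(('a \<times> 'b) \<times> 'c)
    \<Rightarrow> 'k^('a \<times> ('b \<times> 'c))^('a \<times> ('b \<times> 'c))" where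
  "reassoc M = (\<chi> p. \<chi> q.
      M $ ((fst p, fst (snd p)), snd (snd p)) $ ((fst q, fst (snd q)), snd (snd q)))"

end

theory Submission
  imports Defs
begin

text \<open>Cut each operator \<open>M\<close> on \<open>Ha \<otimes> K\<close> into blocks \<open>M(a,a')\<close>, operators on \<open>K\<close>.
The \<open>(a,a')\<close> block of the hypothesis reads
\<open>Qab(a,a') \<otimes> Ic = Qa(a,a') I + \<delta>(a,a') (Qbc - Ib \<otimes> Qc)\<close>.
A diagonal block shows that \<open>Qbc - Ib \<otimes> Qc\<close> has the form \<open>Qb \<otimes> Ic\<close>; cancelling \<open>\<otimes> Ic\<close>
then identifies every block of \<open>Qab\<close> with the corresponding block of \<open>Qa \<otimes> Ib + Ia \<otimes> Qb\<close>.
Uniqueness holds because \<open>X \<mapsto> Ia \<otimes> X\<close> is injective.\<close>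

definition block :: "'k^('a::finite \<times> 'b::finite)^('a \<times> 'b) \<Rightarrow> 'a \<Rightarrow> 'a \<Rightarrow> 'k^'b^'b" where
  "block M i j = (\<chi> x y. M $ (i, x) $ (j, y))"

lemma block_eq_iff: "M = N \<longleftrightarrow> (\<forall>i j. block M i j = block N i j)"
  by (auto simp: block_def vec_eq_iff)

lemma block_add [simp]: "block (M + N) i j = block M i j + block N i j"
  by (simp add: block_def vec_eq_iff)

lemma block_kron_mat1_right [simp]:
  "block (kron A (mat 1 :: 'k::semiring_1^'b::finite^'b)) i j = mat (A $ i $ j)"
  by (simp add: block_def kron_def mat_def vec_eq_iff)

lemma block_kron_mat1_left [simp]:
  "block (kron (mat 1 :: 'k::semiring_1^'a::finite^'a) B) i j = (if i = j then B else 0)"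
  by (simp add: block_def kron_def mat_def vec_eq_iff)

lemma block_reassoc_kron [simp]: "block (reassoc (kron M N)) i j = kron (block M i j) N"
  by (simp add: block_def reassoc_def kron_def vec_eq_iff)

lemma kron_zero_left [simp]: "kron (0 :: 'k::mult_zero^'a::finite^'a) (B :: 'k^'b::finite^'b) = 0"
  by (simp add: kron_def vec_eq_iff)

lemma kron_add_left: "kron (A + B) C = kron A C + kron (B :: 'k::semiring^'a::finite^'a) C"
  by (simp add: kron_def vec_eq_iff distrib_right)

lemma kron_diff_left: "kron (A - B) C = kron A C - kron (B :: 'k::ring^'a::finite^'a) C"
  by (simp add: kron_def vec_eq_iff left_diff_distrib)

lemma kron_mat_mat: "kron (mat c :: 'k::semiring_1^'a::finite^'a) (mat d :: 'k^'b::finite^'b) = mat (c * d)"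
  by (simp add: kron_def mat_def vec_eq_iff)

lemma kron_mat1_right_cancel:
  assumes "kron A (mat 1 :: 'k::semiring_1^'c::finite^'c) = kron B (mat 1)"
  shows "A = B"
proof -
  have "A $ i $ j = B $ i $ j" for i j
    using arg_cong[OF assms, of "\<lambda>M. M $ (i, undefined) $ (j, undefined)"]
    by (simp add: kron_def mat_def)
  then show ?thesis
    by (simp add: vec_eq_iff)
qed

lemma kron_mat1_left_cancel:
  assumes "kron (mat 1 :: 'k::semiring_1^'a::finite^'a) A = kron (mat 1) B"
  shows "A = B"
  using arg_cong[OF assms, of "\<lambda>M. block M undefined undefined"] by simp

theorem proposition1:
  fixes Qa :: "complex^'a::finite^'a"
    and Qc :: "complex^'c::finite^'c"
    and Qab :: "complex^('a \<times> 'b::finite)^('a \<times> 'b)"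
    and Qbc :: "complex^('b \<times> 'c)^('b \<times> 'c)"
  assumes "kron Qa (mat 1 :: complex^('b \<times> 'c)^('b \<times> 'c)) + kron (mat 1 :: complex^'a^'a) Qbc
         = reassoc (kron Qab (mat 1 :: complex^'c^'c))
           + kron (mat 1 :: complex^'a^'a) (kron (mat 1 :: complex^'b^'b) Qc)"
  shows "\<exists>!Qb :: complex^'b^'b.
           Qbc = kron Qb (mat 1 :: complex^'c^'c) + kron (mat 1 :: complex^'b^'b) Qc
         \<and> Qab = kron Qa (mat 1 :: complex^'b^'b) + kron (mat 1 :: complex^'a^'a) Qb"
proof -
  have blocks: "kron (block Qab i j) (mat 1 :: complex^'c^'c)
      = kron (mat (Qa $ i $ j)) (mat 1) + (if i = j then Qbc - kron (mat 1) Qc else 0)" for i j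
    using arg_cong[OF assms, of "\<lambda>M. block M i j"] by (auto simp: kron_mat_mat algebra_simps)
  define a :: 'a where "a = undefined"
  define Qb where "Qb = block Qab a a - mat (Qa $ a $ a)"
  have Qbc: "Qbc = kron Qb (mat 1) + kron (mat 1) Qc"
    using blocks[of a a] by (simp add: Qb_def kron_diff_left)
  have "block Qab i j = block (kron Qa (mat 1) + kron (mat 1) Qb) i j" for i j
    by (rule kron_mat1_right_cancel) (use blocks[of i j] Qbc in \<open>auto simp: kron_add_left\<close>)
  then have Qab: "Qab = kron Qa (mat 1) + kron (mat 1) Qb"
    unfolding block_eq_iff by blast
  show ?thesis
    using Qbc Qab by (metis add_left_cancel kron_mat1_left_cancel)
qed

end
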